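(* Let $\epsilon>0$ and $\omega\ge0$ be constants, $\phi_0$ a real constant, and $\omega(t)$ a real-valued function with $|\omega(t)|\le\omega$. Let $H^A(t)=[1+\omega(t)]I_z+\epsilon\cos\phi_0 I_y+\epsilon\sin\phi_0 I_x$ and $H^B=\epsilon\cos\phi_0 I_y+\epsilon\sin\phi_0 I_x$. Consider two single-qubit pure-state evolutions $\dot\rho^A_t=-i[H^A(t),\rho^A_t]$ and $\dot\rho^B_t=-i[H^B,\rho^B_t]$, both starting from the state with Bloch vector $(x_0,y_0,z_0)=(0,0,1)$, and let $z^A_t=\mathrm{tr}(\rho^A_t\sigma_z)$, $z^B_t=\mathrm{tr}(\rho^B_t\sigma_z)$. Then $z^A_t\ge z^B_t$ for all $t\in\big[0,\frac{\pi}{2\sqrt{4+\epsilon^2}}\big]$.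
   Context: $\sigma_x,\sigma_y,\sigma_z$ are the Pauli matrices $\begin{pmatrix}0&1\\1&0\end{pmatrix},\begin{pmatrix}0&-i\\i&0\end{pmatrix},\begin{pmatrix}1&0\\0&-1\end{pmatrix}$, $I_j=\frac12\sigma_j$, $[A,B]=AB-BA$, units with $\hbar=1$. The Bloch vector of a qubit state $\rho$ is $(x,y,z)=(\mathrm{tr}(\rho\sigma_x),\mathrm{tr}(\rho\sigma_y),\mathrm{tr}(\rho\sigma_z))$, so that $\rho=\frac12(I+x\sigma_x+y\sigma_y+z\sigma_z)$. *)

theory Defs
  imports "HOL-Analysis.Analysis"
begin

type_synonym cmat2 = "complex^2^2"

definition sigma_x :: cmat2 where
  "sigma_x = (\<chi> i j. if i \<noteq> j then 1 else 0)"

definition sigma_y :: cmat2 where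
  "sigma_y = (\<chi> i j. if i = 1 \<and> j = 2 then - \<i> else if i = 2 \<and> j = 1 then \<i> else 0)"

definition sigma_z :: cmat2 where
  "sigma_z = (\<chi> i j. if i = j then (if i = 1 then 1 else -1) else 0)"

definition cscale :: "complex \<Rightarrow> cmat2 \<Rightarrow> cmat2" where
  "cscale c M = (\<chi> i j. c * M $ i $ j)"

definition I_x :: cmat2 where "I_x = cscale (1/2) sigma_x"
definition I_y :: cmat2 where "I_y = cscale (1/2) sigma_y"
definition I_z :: cmat2 where "I_z = cscale (1/2) sigma_z"

definition commutator :: "cmat2 \<Rightarrow> cmat2 \<Rightarrow> cmat2" where
  "commutator A B = A ** B - B ** A"

definition bloch_z :: "cmat2 \<Rightarrow> real" where
  "bloch_z \<rho> = Re (trace (\<rho> ** sigma_z))"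

definition rho0 :: cmat2 where
  "rho0 = cscale (1/2) (mat 1 + sigma_z)"

definition HA :: "real \<Rightarrow> real \<Rightarrow> real \<Rightarrow> cmat2" where
  "HA \<epsilon> \<phi>0 w = cscale (complex_of_real (1 + w)) I_z
      + cscale (complex_of_real (\<epsilon> * cos \<phi>0)) I_y
      + cscale (complex_of_real (\<epsilon> * sin \<phi>0)) I_x"

definition HB :: "real \<Rightarrow> real \<Rightarrow> cmat2" where
  "HB \<epsilon> \<phi>0 = cscale (complex_of_real (\<epsilon> * cos \<phi>0)) I_y
      + cscale (complex_of_real (\<epsilon> * sin \<phi>0)) I_x"

end

theory Submission
  imports Defs
begin

text \<open>For a Hamiltonian \<open>h \<cdot> I\<close> the Bloch vector \<open>r\<close> precesses, \<open>r' = h \<times> r\<close>, so \<open>|r| = 1\<close> is conserved.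
  In both evolutions the transverse part \<open>(\<epsilon> sin \<phi>\<^sub>0, \<epsilon> cos \<phi>\<^sub>0)\<close> of \<open>h\<close> has length \<open>\<epsilon>\<close>, hence
  \<open>|z'| \<le> \<epsilon> sqrt (1 - z\<^sup>2)\<close>: the polar angle \<open>arccos z\<close> grows at rate at most \<open>\<epsilon>\<close>, and
  \<open>z\<^sup>A t \<ge> cos (\<epsilon> t)\<close> as long as \<open>\<epsilon> t \<le> pi\<close>. Without the longitudinal field the evolution is a
  uniform rotation about the transverse axis, so \<open>z\<^sup>B t = cos (\<epsilon> t)\<close> exactly.\<close>

unbundle cross3_syntax

lemma nonpos_if_DERIV_nonpos_at_small_positive:
  fixes g :: "real \<Rightarrow> real"
  assumes cont: "continuous_on {a..b} g" and "g a \<le> 0" and "\<delta> > 0"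
    and deriv: "\<And>t. a < t \<Longrightarrow> t < b \<Longrightarrow> 0 < g t \<Longrightarrow> g t < \<delta> \<Longrightarrow> \<exists>y. DERIV g t :> y \<and> y \<le> 0"
    and t1: "t1 \<in> {a..b}"
  shows "g t1 \<le> 0"
proof (rule ccontr)
  assume "\<not> g t1 \<le> 0"
  then have pos_t1: "g t1 > 0" by simp
  define Z where "Z = {a..t1} \<inter> g -` {..0}"
  define t0 where "t0 = Sup Z"
  have "closed Z"
    unfolding Z_def using t1 by (intro continuous_closed_preimage continuous_on_subset[OF cont]) auto
  moreover have "a \<in> Z" using \<open>g a \<le> 0\<close> t1 by (simp add: Z_def)
  moreover have "bdd_above Z" by (auto simp: Z_def)
  ultimately have "t0 \<in> Z" unfolding t0_def using closed_contains_Sup by blast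
  then have t0: "a \<le> t0" "t0 < t1" "g t0 \<le> 0"
    using pos_t1 by (auto simp: Z_def le_less)
  have pos_after_t0: "g s > 0" if "t0 < s" "s \<le> t1" for s
    using cSup_upper[OF _ \<open>bdd_above Z\<close>, of s] that t0 by (force simp: Z_def t0_def)
  \<comment> \<open>Just after \<open>t0\<close>, the last point with \<open>g \<le> 0\<close>, \<open>g\<close> lies in \<open>(0, \<delta>)\<close>, so it cannot increase.\<close>
  have "t0 \<in> {a..b}" using t0 t1 by auto
  then obtain d where "d > 0" and close: "\<forall>s\<in>{a..b}. dist s t0 < d \<longrightarrow> dist (g s) (g t0) < \<delta>"
    using cont \<open>\<delta> > 0\<close> unfolding continuous_on_iff by blast
  have small: "g s < \<delta>" if "s \<in> {a..b}" "dist s t0 < d" for s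
    using close that t0 by (force simp: dist_real_def)
  define s where "s = min (t0 + d / 2) t1"
  have s: "t0 < s" "s \<le> t1" using \<open>d > 0\<close> t0 by (auto simp: s_def)
  have "g s \<le> g t0"
  proof (rule DERIV_nonpos_imp_decreasing_open[of t0 s g])
    show "continuous_on {t0..s} g" using t0 s t1 by (intro continuous_on_subset[OF cont]) auto
    fix x assume "t0 < x" "x < s"
    moreover have "dist x t0 < d" using \<open>x < s\<close> \<open>t0 < x\<close> by (simp add: s_def dist_real_def)
    ultimately show "\<exists>y. DERIV g x :> y \<and> y \<le> 0"
      using deriv small pos_after_t0 t0 s t1 by auto
  qed (use s in simp)
  then show False using pos_after_t0[OF s] t0 by simp
qed

lemma cos_le_if_deriv_bounded_by_sqrt:
  fixes z z' :: "real \<Rightarrow> real"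
  assumes "c \<ge> 0" and "z 0 = 1"
    and deriv: "\<And>t. t \<ge> 0 \<Longrightarrow> (z has_real_derivative z' t) (at t within {0..})"
    and range: "\<And>t. t \<ge> 0 \<Longrightarrow> \<bar>z t\<bar> \<le> 1"
    and speed: "\<And>t. t \<ge> 0 \<Longrightarrow> \<bar>z' t\<bar> \<le> c * sqrt (1 - (z t)\<^sup>2)"
    and "0 \<le> T" and "c * T \<le> pi"
  shows "cos (c * T) \<le> z T"
proof (cases "c * T = pi")
  case True
  then show ?thesis using range[OF \<open>0 \<le> T\<close>] by simp
next
  case False
  then have cT: "c * T < pi" using \<open>c * T \<le> pi\<close> by simp
  \<comment> \<open>The window \<open>\<delta> = pi - c T\<close> keeps the angle \<open>arccos z\<close> inside \<open>(0, pi)\<close>,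
    where \<open>arccos\<close> is differentiable.\<close>
  define g where "g t = arccos (z t) - c * t" for t
  have "(z has_real_derivative z' t) (at t within {0..T})" if "t \<in> {0..T}" for t
    using deriv[of t] that by (auto intro: has_field_derivative_subset)
  then have "continuous_on {0..T} z"
    by (rule DERIV_continuous_on)
  moreover have "\<forall>t\<in>{0..T}. -1 \<le> z t \<and> z t \<le> 1"
    using range by (auto simp: abs_le_iff)
  ultimately have "continuous_on {0..T} g"
    unfolding g_def by (intro continuous_intros)
  then have "g T \<le> 0"
  proof (rule nonpos_if_DERIV_nonpos_at_small_positive[where \<delta> = "pi - c * T"])
    fix s assume s: "0 < s" "s < T" "0 < g s" "g s < pi - c * T"
    have "0 \<le> c * s" "c * s \<le> c * T" using s \<open>c \<ge> 0\<close> by (simp_all add: mult_left_mono)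
    then have "0 < arccos (z s)" "arccos (z s) < pi"
      using s by (simp_all add: g_def)
    then have "z s \<noteq> -1" "z s \<noteq> 1" by auto
    then have z_inside: "-1 < z s" "z s < 1"
      using range[of s] s by (auto simp: abs_le_iff)
    have "(z has_real_derivative z' s) (at s)"
      using has_field_derivative_subset[OF deriv[of s], of "{0<..}"] s
      by (simp add: at_within_open[of s "{0<..}"] subset_eq)
    then have "(g has_real_derivative inverse (- sqrt (1 - (z s)\<^sup>2)) * z' s - c) (at s)"
      unfolding g_def using z_inside
      by (auto intro!: derivative_eq_intros DERIV_chain2[OF DERIV_arccos])
    moreover have "inverse (- sqrt (1 - (z s)\<^sup>2)) * z' s - c \<le> 0"
    proof -
      have "0 < sqrt (1 - (z s)\<^sup>2)" using z_inside by (simp add: abs_square_less_1)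
      then show ?thesis using speed[of s] s by (auto simp: field_simps abs_le_iff)
    qed
    ultimately show "\<exists>y. DERIV g s :> y \<and> y \<le> 0" by blast
  qed (use cT \<open>0 \<le> T\<close> \<open>z 0 = 1\<close> in \<open>auto simp: g_def\<close>)
  then have "arccos (z T) \<le> c * T" by (simp add: g_def)
  then have "cos (c * T) \<le> cos (arccos (z T))"
    using range[of T] \<open>0 \<le> T\<close> cT by (intro cos_monotone_0_pi_le) (auto simp: arccos_lbound)
  then show ?thesis using range[of T] \<open>0 \<le> T\<close> by (simp add: abs_le_iff)
qed

lemma cross_cross_right: "x \<times> (y \<times> z) = (x \<bullet> z) *\<^sub>R y - (x \<bullet> y) *\<^sub>R z"
  by (simp add: cross3_simps forall_3)

lemma abs_cross_nth_3_le:
  fixes c :: real and h r :: "real^3"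
  assumes "(h$1)\<^sup>2 + (h$2)\<^sup>2 = c\<^sup>2" and "c \<ge> 0" and "norm r = 1"
  shows "\<bar>(h \<times> r) $ 3\<bar> \<le> c * sqrt (1 - (r$3)\<^sup>2)"
proof -
  have "(r$1)\<^sup>2 + (r$2)\<^sup>2 + (r$3)\<^sup>2 = 1"
    using assms(3) by (simp add: norm_eq_sqrt_inner inner_vec_def sum_3 power2_eq_square)
  then have planar: "(r$1)\<^sup>2 + (r$2)\<^sup>2 = 1 - (r$3)\<^sup>2" by linarith
  \<comment> \<open>Lagrange's identity in the plane\<close>
  have "((h \<times> r) $ 3)\<^sup>2 + (h$1 * r$1 + h$2 * r$2)\<^sup>2 = ((h$1)\<^sup>2 + (h$2)\<^sup>2) * ((r$1)\<^sup>2 + (r$2)\<^sup>2)"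
    by (simp add: cross3_def power2_eq_square algebra_simps)
  then have "((h \<times> r) $ 3)\<^sup>2 \<le> c\<^sup>2 * (1 - (r$3)\<^sup>2)"
    using assms(1) planar by (smt (verit) zero_le_power2)
  also have "\<dots> = (c * sqrt (1 - (r$3)\<^sup>2))\<^sup>2"
    using planar[symmetric] by (simp add: power_mult_distrib)
  finally have "((h \<times> r) $ 3)\<^sup>2 \<le> (c * sqrt (1 - (r$3)\<^sup>2))\<^sup>2" .
  moreover have "0 \<le> c * sqrt (1 - (r$3)\<^sup>2)"
    using assms(2) planar[symmetric] by simp
  ultimately show ?thesis
    by (simp add: power2_le_iff_abs_le)
qed

lemma has_real_derivative_vec_nth:
  assumes "(r has_vector_derivative r') F"
  shows "((\<lambda>t. r t $ i) has_real_derivative r' $ i) F"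
  using bounded_linear.has_vector_derivative[OF bounded_linear_vec_nth assms]
  by (simp add: has_real_derivative_iff_has_vector_derivative)

lemma precession_preserves_norm:
  fixes r h :: "real \<Rightarrow> real^3"
  assumes "\<And>t. t \<ge> 0 \<Longrightarrow> (r has_vector_derivative h t \<times> r t) (at t within {0..})"
    and "t \<ge> 0"
  shows "norm (r t) = norm (r 0)"
proof -
  have "((\<lambda>t. r t \<bullet> r t) has_derivative (\<lambda>d. 0)) (at s within {0..})" if "s \<in> {0..}" for s
  proof -
    have "((\<lambda>t. r t \<bullet> r t) has_derivative (\<lambda>d. r s \<bullet> (d *\<^sub>R (h s \<times> r s)) + d *\<^sub>R (h s \<times> r s) \<bullet> r s)) (at s within {0..})"
      using assms(1)[of s] that unfolding has_vector_derivative_def by (intro has_derivative_inner) simp_all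
    then show ?thesis by (simp only: inner_scaleR_left inner_scaleR_right dot_cross_self mult_zero_right add_0)
  qed
  then obtain c where "\<forall>s\<in>{0..}. r s \<bullet> r s = c"
    using has_derivative_zero_constant[OF convex_real_interval(1)] by blast
  then show ?thesis using assms(2) by (simp add: norm_eq_sqrt_inner)
qed

lemma precession_unique:
  fixes r1 r2 h :: "real \<Rightarrow> real^3"
  assumes "\<And>t. t \<ge> 0 \<Longrightarrow> (r1 has_vector_derivative h t \<times> r1 t) (at t within {0..})"
    and "\<And>t. t \<ge> 0 \<Longrightarrow> (r2 has_vector_derivative h t \<times> r2 t) (at t within {0..})"
    and "r1 0 = r2 0" and "t \<ge> 0"
  shows "r1 t = r2 t"
proof -
  have "((\<lambda>t. r1 t - r2 t) has_vector_derivative h s \<times> (r1 s - r2 s)) (at s within {0..})"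
    if "s \<ge> 0" for s
    using has_vector_derivative_diff[OF assms(1,2)[OF that]] by (simp add: Cross3.right_diff_distrib)
  from precession_preserves_norm[OF this \<open>t \<ge> 0\<close>] show ?thesis
    using assms(3) by simp
qed

lemma uniform_precession_has_vector_derivative:
  fixes n u :: "real^3" and c :: real
  assumes "n \<bullet> n = 1" and "n \<bullet> u = 0"
  defines "r \<equiv> \<lambda>t. cos (c * t) *\<^sub>R u + sin (c * t) *\<^sub>R (n \<times> u)"
  shows "(r has_vector_derivative (c *\<^sub>R n) \<times> r t) (at t within S)"
proof -
  have "n \<times> (n \<times> u) = - u"
    using assms(1,2) by (simp add: cross_cross_right)
  then have "(c *\<^sub>R n) \<times> r t = (c * cos (c * t)) *\<^sub>R (n \<times> u) - (c * sin (c * t)) *\<^sub>R u"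
    by (simp add: r_def cross_add_right cross_mult_left cross_mult_right algebra_simps)
  moreover have "(r has_vector_derivative
      (cos (c * t) * c) *\<^sub>R (n \<times> u) - (sin (c * t) * c) *\<^sub>R u) (at t within S)"
    unfolding r_def by (auto intro!: derivative_eq_intros)
  ultimately show ?thesis by (simp add: mult.commute)
qed

definition bloch :: "cmat2 \<Rightarrow> real^3" where
  "bloch \<rho> = vector [Re (trace (\<rho> ** sigma_x)), Re (trace (\<rho> ** sigma_y)), Re (trace (\<rho> ** sigma_z))]"

definition spin_hamiltonian :: "real^3 \<Rightarrow> cmat2" where
  "spin_hamiltonian h = cscale (complex_of_real (h$1)) I_x + cscale (complex_of_real (h$2)) I_y
     + cscale (complex_of_real (h$3)) I_z"

lemma bloch_nth_3 [simp]: "bloch \<rho> $ 3 = bloch_z \<rho>"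
  by (simp add: bloch_def bloch_z_def)

lemma bloch_rho0: "bloch rho0 = axis 3 1"
  by (simp add: bloch_def rho0_def cscale_def sigma_x_def sigma_y_def sigma_z_def mat_def trace_def
      matrix_matrix_mult_def sum_2 vec_eq_iff forall_3 axis_def vector_3)

text \<open>No hermiticity of \<open>\<rho>\<close> is needed: the anti-Hermitian part of \<open>\<rho>\<close> contributes nothing
  to the real parts of the traces, on either side.\<close>

lemma bloch_equation:
  "bloch (cscale (- \<i>) (commutator (spin_hamiltonian h) \<rho>)) = h \<times> bloch \<rho>"
  by (simp add: bloch_def spin_hamiltonian_def cross3_def cscale_def commutator_def I_x_def I_y_def I_z_def
      sigma_x_def sigma_y_def sigma_z_def trace_def matrix_matrix_mult_def sum_2 vec_eq_iff forall_3 vector_3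
      algebra_simps)

lemma bounded_linear_bloch: "bounded_linear bloch"
  unfolding linear_conv_bounded_linear[symmetric]
  by (rule linearI) (simp_all add: bloch_def trace_def matrix_matrix_mult_def sum_2 vec_eq_iff forall_3 vector_3
      algebra_simps)

lemma bloch_has_vector_derivative:
  assumes "(\<rho> has_vector_derivative cscale (- \<i>) (commutator (spin_hamiltonian h) (\<rho> t))) F"
  shows "((\<lambda>t. bloch (\<rho> t)) has_vector_derivative h \<times> bloch (\<rho> t)) F"
  using bounded_linear.has_vector_derivative[OF bounded_linear_bloch assms]
  by (simp add: bloch_equation)

lemma HA_eq_spin_hamiltonian: "HA \<epsilon> \<phi> w = spin_hamiltonian (vector [\<epsilon> * sin \<phi>, \<epsilon> * cos \<phi>, 1 + w])"
  by (simp add: HA_def spin_hamiltonian_def vector_3 algebra_simps)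

lemma HB_eq_spin_hamiltonian: "HB \<epsilon> \<phi> = spin_hamiltonian (\<epsilon> *\<^sub>R vector [sin \<phi>, cos \<phi>, 0])"
  by (simp add: HB_def spin_hamiltonian_def vector_3 cscale_def vec_eq_iff)

lemma HB_evolution_bloch_z:
  assumes "\<rho> 0 = rho0"
    and "\<And>t. t \<ge> 0 \<Longrightarrow>
           (\<rho> has_vector_derivative cscale (- \<i>) (commutator (HB \<epsilon> \<phi>) (\<rho> t))) (at t within {0..})"
    and "t \<ge> 0"
  shows "bloch_z (\<rho> t) = cos (\<epsilon> * t)"
proof -
  define n :: "real^3" where "n = vector [sin \<phi>, cos \<phi>, 0]"
  define u :: "real^3" where "u = axis 3 1"
  define r where "r t = cos (\<epsilon> * t) *\<^sub>R u + sin (\<epsilon> * t) *\<^sub>R (n \<times> u)" for t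
  have "bloch (\<rho> t) = r t"
  proof (rule precession_unique[of "\<lambda>t. bloch (\<rho> t)" "\<lambda>_. \<epsilon> *\<^sub>R n" r])
    show "((\<lambda>t. bloch (\<rho> t)) has_vector_derivative (\<epsilon> *\<^sub>R n) \<times> bloch (\<rho> s)) (at s within {0..})"
      if "s \<ge> 0" for s
      using bloch_has_vector_derivative[OF assms(2)[OF that, unfolded HB_eq_spin_hamiltonian]] by (simp add: n_def)
    have "n \<bullet> n = 1" "n \<bullet> u = 0"
      by (simp_all add: n_def u_def inner_vec_def sum_3 axis_def power2_eq_square[symmetric])
    then show "(r has_vector_derivative (\<epsilon> *\<^sub>R n) \<times> r s) (at s within {0..})" for s
      unfolding r_def by (rule uniform_precession_has_vector_derivative)
    show "bloch (\<rho> 0) = r 0"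
      using assms(1) by (simp add: bloch_rho0 r_def u_def)
  qed (rule assms(3))
  then have "bloch (\<rho> t) $ 3 = r t $ 3" by (rule arg_cong)
  then show ?thesis
    by (simp add: r_def n_def u_def cross3_def axis_def)
qed

lemma HA_evolution_bloch_z_lower_bound:
  assumes "\<epsilon> \<ge> 0" and "\<rho> 0 = rho0"
    and "\<And>t. t \<ge> 0 \<Longrightarrow>
           (\<rho> has_vector_derivative cscale (- \<i>) (commutator (HA \<epsilon> \<phi> (w t)) (\<rho> t))) (at t within {0..})"
    and "0 \<le> t" and "\<epsilon> * t \<le> pi"
  shows "cos (\<epsilon> * t) \<le> bloch_z (\<rho> t)"
proof -
  define h :: "real \<Rightarrow> real^3" where "h s = vector [\<epsilon> * sin \<phi>, \<epsilon> * cos \<phi>, 1 + w s]" for s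
  define r where "r s = bloch (\<rho> s)" for s
  have deriv: "(r has_vector_derivative h s \<times> r s) (at s within {0..})" if "s \<ge> 0" for s
    unfolding r_def h_def using bloch_has_vector_derivative[OF assms(3)[OF that, unfolded HA_eq_spin_hamiltonian]] .
  have unit: "norm (r s) = 1" if "s \<ge> 0" for s
    using precession_preserves_norm[OF deriv that] assms(2) by (simp add: r_def bloch_rho0)
  have "cos (\<epsilon> * t) \<le> r t $ 3"
  proof (rule cos_le_if_deriv_bounded_by_sqrt[where z' = "\<lambda>s. (h s \<times> r s) $ 3"])
    show "r 0 $ 3 = 1" using assms(2) by (simp add: r_def bloch_rho0)
    show "((\<lambda>s. r s $ 3) has_real_derivative (h s \<times> r s) $ 3) (at s within {0..})" if "s \<ge> 0" for s
      using deriv[OF that] by (rule has_real_derivative_vec_nth)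
    show "\<bar>r s $ 3\<bar> \<le> 1" if "s \<ge> 0" for s
      using component_le_norm_cart[of "r s" 3] unit[OF that] by simp
    show "\<bar>(h s \<times> r s) $ 3\<bar> \<le> \<epsilon> * sqrt (1 - (r s $ 3)\<^sup>2)" if "s \<ge> 0" for s
      using unit[OF that] assms(1)
      by (intro abs_cross_nth_3_le) (simp_all add: h_def power_mult_distrib flip: distrib_left)
  qed fact+
  then show ?thesis by (simp add: r_def)
qed

theorem lemma2:
  fixes \<epsilon> \<omega> \<phi>0 :: real
    and \<omega>t :: "real \<Rightarrow> real"
    and \<rho>A \<rho>B :: "real \<Rightarrow> complex^2^2"
  assumes "\<epsilon> > 0" and "\<omega> \<ge> 0"
    and "\<And>t. \<bar>\<omega>t t\<bar> \<le> \<omega>"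
    and "\<rho>A 0 = rho0" and "\<rho>B 0 = rho0"
    and "\<And>t. t \<ge> 0 \<Longrightarrow>
           (\<rho>A has_vector_derivative cscale (- \<i>) (commutator (HA \<epsilon> \<phi>0 (\<omega>t t)) (\<rho>A t)))
             (at t within {0..})"
    and "\<And>t. t \<ge> 0 \<Longrightarrow>
           (\<rho>B has_vector_derivative cscale (- \<i>) (commutator (HB \<epsilon> \<phi>0) (\<rho>B t)))
             (at t within {0..})"
  shows "\<forall>t \<in> {0 .. pi / (2 * sqrt (4 + \<epsilon>\<^sup>2))}. bloch_z (\<rho>A t) \<ge> bloch_z (\<rho>B t)"
proof
  fix t assume t: "t \<in> {0 .. pi / (2 * sqrt (4 + \<epsilon>\<^sup>2))}"
  have "\<epsilon> \<le> sqrt (4 + \<epsilon>\<^sup>2)"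
    by (rule real_le_rsqrt) simp
  then have "\<epsilon> * t \<le> sqrt (4 + \<epsilon>\<^sup>2) * (pi / (2 * sqrt (4 + \<epsilon>\<^sup>2)))"
    using t assms(1) by (intro mult_mono) auto
  also have "\<dots> \<le> pi" by simp
  finally have "\<epsilon> * t \<le> pi" .
  then have "cos (\<epsilon> * t) \<le> bloch_z (\<rho>A t)"
    using HA_evolution_bloch_z_lower_bound[OF _ assms(4,6)] assms(1) t by simp
  moreover have "bloch_z (\<rho>B t) = cos (\<epsilon> * t)"
    using HB_evolution_bloch_z[OF assms(5,7)] t by simp
  ultimately show "bloch_z (\<rho>A t) \<ge> bloch_z (\<rho>B t)" by simp
qed

end
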